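(* For every $n\ge1$, $$\Psi_n=\sum_{I\vDash n}(-1)^{\ell(I)-1}V_I,$$ the sum over all compositions $I$ of $n$, $\ell(I)$ denoting the number of parts.
   Context: Permutations are words. A word $a_1\cdots a_m$ is initially dominated if $a_1>a_j$ for all $j\ge2$; every permutation factors uniquely as $\sigma=u_1\cdots u_r$ into initially dominated words with increasing first letters, and $\mathrm{SC}(\sigma)=(|u_1|,\ldots,|u_r|)$. For a composition $I$ of $n$ with descent set $\mathrm{Des}(I)=\{i_1,\ldots,i_1+\cdots+i_{r-1}\}$, $\overline{I}^{\sim}$ is the composition of $n$ with descent set $\{1,\ldots,n-1\}\setminus\mathrm{Des}(I)$. $\mathrm{RC}(\sigma)$ is the composition with descent set $\{i: i+1\text{ is left of } i\text{ in }\sigma\}$. In $QSym$ (fundamental basis $F_I$) let $U_J=\sum_{\mathrm{SC}(\sigma)=\overline{J}^{\sim}}F_{\mathrm{RC}(\sigma)}$, a basis. $\mathbf{Sym}$ is the algebra of noncommutative symmetric functions with ribbon basis $R_I$, dual to $QSym$ via $\langle F_I,R_J\rangle=\delta_{IJ}$; $(V_I)$ is the basis dual to $(U_I)$. $\Psi_n$ is the noncommutative power sum of the first kind, $\Psi_n=\sum_{k=0}^{n-1}(-1)^kR_{1^k,n-k}$. *)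

theory Defs
  imports Main "HOL-Combinatorics.Multiset_Permutations"
begin

definition comps :: "nat \<Rightarrow> nat list set" where
  "comps n = {I. sum_list I = n \<and> 0 \<notin> set I}"

definition perms :: "nat \<Rightarrow> nat list set" where
  "perms n = permutations_of_set {1..n}"

definition init_dom :: "nat list \<Rightarrow> bool" where
  "init_dom u \<longleftrightarrow> u \<noteq> [] \<and> (\<forall>j. 1 \<le> j \<and> j < length u \<longrightarrow> u ! j < u ! 0)"

definition SC :: "nat list \<Rightarrow> nat list" where
  "SC \<sigma> = map length (THE us. concat us = \<sigma> \<and> (\<forall>u\<in>set us. init_dom u)
                               \<and> sorted_wrt (<) (map hd us))"

definition des :: "nat list \<Rightarrow> nat set" where
  "des I = {sum_list (take k I) | k. 1 \<le> k \<and> k < length I}"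

definition comp_of_des :: "nat \<Rightarrow> nat set \<Rightarrow> nat list" where
  "comp_of_des n D = (let bs = 0 # sorted_list_of_set D @ [n]
                      in map (\<lambda>i. bs ! (i+1) - bs ! i) [0..<card D + 1])"

definition compl_comp :: "nat \<Rightarrow> nat list \<Rightarrow> nat list" where
  "compl_comp n I = comp_of_des n ({1..<n} - des I)"

definition RC :: "nat \<Rightarrow> nat list \<Rightarrow> nat list" where
  "RC n \<sigma> = comp_of_des n {i \<in> {1..<n}. \<exists>j k. j < k \<and> k < length \<sigma> \<and> \<sigma> ! j = i + 1 \<and> \<sigma> ! k = i}"

(* Homogeneous elements of degree n of QSym (resp. Sym) are represented by
   their coefficient functions in the fundamental basis F_K (resp. ribbon basis R_K),
   supported on comps n. *)

definition U :: "nat \<Rightarrow> nat list \<Rightarrow> nat list \<Rightarrow> rat" where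
  "U n J = (\<lambda>K. of_nat (card {\<sigma> \<in> perms n. SC \<sigma> = compl_comp n J \<and> RC n \<sigma> = K}))"

(* duality pairing <F_I, R_J> = delta_{IJ} in degree n *)
definition pair :: "nat \<Rightarrow> (nat list \<Rightarrow> rat) \<Rightarrow> (nat list \<Rightarrow> rat) \<Rightarrow> rat" where
  "pair n f g = (\<Sum>K\<in>comps n. f K * g K)"

definition V :: "nat \<Rightarrow> nat list \<Rightarrow> nat list \<Rightarrow> rat" where
  "V n I = (THE v. (\<forall>K. K \<notin> comps n \<longrightarrow> v K = 0) \<and>
                  (\<forall>J\<in>comps n. pair n (U n J) v = (if J = I then 1 else 0)))"

definition Psi :: "nat \<Rightarrow> nat list \<Rightarrow> rat" where
  "Psi n = (\<lambda>K. \<Sum>k<n. (-1)^k * (if K = replicate k 1 @ [n - k] then 1 else 0))"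

end

theory Submission
  imports Defs
begin

(* Write D(I) for the descent set of a composition I. Cutting a permutation before each of its
   left-to-right maxima produces its SC-factorization, so SC(sigma) is the complement of J exactly
   when the non-maximum positions of sigma form D(J); likewise RC(sigma) = K exactly when the
   recoil set of sigma is D(K). Hence <U_J, R_K> counts permutations with prescribed non-maxima
   D(J) and recoils D(K). Every left-to-right maximum at a position p >= t can be matched with a
   distinct ascent value >= t, so no tail {t..} contains more recoils than non-maxima: the matrix
   of U is triangular with nonzero diagonal, V is well defined, and every f in Sym_n equals
   Sum_I <U_I, f> V_I. Finally, a permutation with recoil set {1..k} is k+1 followed by a shuffle
   of the words k...1 and k+2...n, so it is determined by its set of non-maxima, which has k
   elements; therefore <U_J, Psi_n> = Sum_k (-1)^k [|D(J)| = k] = (-1)^(l(J)-1). *)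

section \<open>Compositions and descent sets\<close>

lemma des_Nil [simp]: "des [] = {}"
  by (simp add: des_def)

lemma des_Cons: "des (a # I) = (if I = [] then {} else insert a ((+) a ` des I))"
proof (cases "I = []")
  case True
  then show ?thesis by (simp add: des_def)
next
  case False
  have "des (a # I) = {sum_list (take k (a # I)) | k. 1 \<le> k \<and> k < Suc (length I)}"
    by (simp add: des_def)
  also have "\<dots> = insert a ((+) a ` des I)"
  proof (rule set_eqI, rule iffI)
    fix x assume "x \<in> {sum_list (take k (a # I)) | k. 1 \<le> k \<and> k < Suc (length I)}"
    then obtain k where k: "1 \<le> k" "k < Suc (length I)" "x = sum_list (take k (a # I))"
      by auto
    show "x \<in> insert a ((+) a ` des I)"
    proof (cases "k = 1")
      case True
      then show ?thesis using k by simp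
    next
      case False
      then obtain k' where "k = Suc k'" "1 \<le> k'" using k by (cases k) auto
      then show ?thesis using k unfolding des_def by auto
    qed
  next
    fix x assume "x \<in> insert a ((+) a ` des I)"
    then show "x \<in> {sum_list (take k (a # I)) | k. 1 \<le> k \<and> k < Suc (length I)}"
    proof
      assume "x = a"
      then show ?thesis using False by (auto intro!: exI[of _ 1])
    next
      assume "x \<in> (+) a ` des I"
      then obtain k where "1 \<le> k" "k < length I" "x = a + sum_list (take k I)"
        unfolding des_def by auto
      then show ?thesis by (auto intro!: exI[of _ "Suc k"])
    qed
  qed
  finally show ?thesis using False by simp
qed

lemma des_snoc: "des (I @ [a]) = des I \<union> (if I = [] then {} else {sum_list I})"
proof -
  have "des (I @ [a]) = {sum_list (take k I) | k. 1 \<le> k \<and> k < Suc (length I)}"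
    unfolding des_def by (rule Collect_cong, rule ex_cong1) auto
  also have "\<dots> = des I \<union> (if I = [] then {} else {sum_list I})"
    unfolding des_def by (auto simp: less_Suc_eq Suc_le_eq) (rule exI[of _ "length I"], auto)
  finally show ?thesis .
qed

lemma des_subset: "0 \<notin> set I \<Longrightarrow> des I \<subseteq> {1..<sum_list I}"
proof (induction I)
  case (Cons a I)
  then show ?case
    by (cases "I = []") (auto simp: des_Cons, (cases I; auto)+)
qed simp

lemma des_subset_comps: "I \<in> comps n \<Longrightarrow> des I \<subseteq> {1..<n}"
  using des_subset by (auto simp: comps_def)

lemma card_des: "0 \<notin> set I \<Longrightarrow> card (des I) = length I - 1"
proof (induction I)
  case (Cons a I)
  show ?case
  proof (cases "I = []")
    case True
    then show ?thesis by (simp add: des_Cons)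
  next
    case False
    have "finite (des I)" "a \<notin> (+) a ` des I"
      using des_subset[of I] Cons.prems finite_subset by auto
    then have "card (des (a # I)) = Suc (card (des I))"
      using False by (simp add: des_Cons card_image)
    then show ?thesis using Cons False by (cases I) auto
  qed
qed simp

lemma inj_on_des: "inj_on des (comps n)"
proof -
  have "I = I'" if "I \<in> comps n" "I' \<in> comps n" "des I = des I'" for I I' n
    using that
  proof (induction I arbitrary: n I')
    case Nil
    then show ?case by (cases I') (auto simp: comps_def)
  next
    case (Cons a I)
    obtain a' J where I': "I' = a' # J"
      using Cons.prems by (cases I') (auto simp: comps_def)
    have ds: "des I \<subseteq> {1..<sum_list I}" "des J \<subseteq> {1..<sum_list J}"
      using des_subset Cons.prems I' by (auto simp: comps_def)
    show ?case
    proof (cases "I = []")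
      case True
      then have "J = []"
        using Cons.prems I' by (auto simp: des_Cons split: if_splits)
      then show ?thesis using True Cons.prems I' by (simp add: comps_def)
    next
      case False
      then have "J \<noteq> []" using Cons.prems I' by (auto simp: des_Cons split: if_splits)
      have e: "insert a ((+) a ` des I) = insert a' ((+) a' ` des J)"
        using Cons.prems I' False \<open>J \<noteq> []\<close> by (simp add: des_Cons)
      \<comment> \<open>the first part is the least element of the descent set\<close>
      have "a = a'"
      proof (rule ccontr)
        assume "a \<noteq> a'"
        then have "a \<in> (+) a' ` des J" "a' \<in> (+) a ` des I"
          using e by (metis insertE insertI1)+
        then show False using ds by auto
      qed
      have "a \<notin> (+) a ` des I" "a \<notin> (+) a ` des J" using ds by auto
      then have "(+) a ` des I = (+) a ` des J"
        using e \<open>a = a'\<close> by (metis Diff_insert_absorb)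
      then have "des I = des J" by (simp add: inj_image_eq_iff)
      moreover have "I \<in> comps (n - a)" "J \<in> comps (n - a)"
        using Cons.prems I' \<open>a = a'\<close> by (auto simp: comps_def)
      ultimately show ?thesis using Cons.IH I' \<open>a = a'\<close> by blast
    qed
  qed
  then show ?thesis by (meson inj_onI)
qed

lemma sum_take_map_upt:
  fixes bs :: "nat list"
  assumes "\<And>i. i < N \<Longrightarrow> bs ! i \<le> bs ! Suc i" "k \<le> N"
  shows "sum_list (take k (map (\<lambda>i. bs ! (i+1) - bs ! i) [0..<N])) = bs ! k - bs ! 0"
  using assms(2)
proof (induction k)
  case (Suc k)
  have "bs ! 0 \<le> bs ! k"
    by (rule lift_Suc_mono_le_ivl[where N = "{0..<N}"]) (use assms(1) Suc.prems in auto)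
  then show ?case using Suc assms(1)[of k] by (simp add: take_map)
qed simp

lemma comp_of_des_correct:
  assumes D: "D \<subseteq> {1..<n}" and n: "n \<ge> 1"
  shows "comp_of_des n D \<in> comps n" "des (comp_of_des n D) = D"
proof -
  have fin: "finite D" using D finite_subset by blast
  define xs where "xs = sorted_list_of_set D"
  define m where "m = card D"
  define bs where "bs = 0 # xs @ [n]"
  have lxs: "length xs = m" using fin by (simp add: xs_def m_def)
  have sxs: "set xs = D" "sorted_wrt (<) xs" using fin by (simp_all add: xs_def)
  have "sorted_wrt (<) bs"
    using D n sxs by (auto simp: bs_def sorted_wrt_append)
  then have lt: "\<And>i j. i < j \<Longrightarrow> j < m+2 \<Longrightarrow> bs ! i < bs ! j"
    using lxs by (simp add: sorted_wrt_iff_nth_less bs_def)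
  have C: "comp_of_des n D = map (\<lambda>i. bs ! (i+1) - bs ! i) [0..<m+1]"
    by (simp add: comp_of_des_def Let_def bs_def xs_def m_def)
  have b0: "bs ! 0 = 0" by (simp add: bs_def)
  have ps: "sum_list (take k (comp_of_des n D)) = bs ! k" if "k \<le> m+1" for k
    unfolding C using that by (subst sum_take_map_upt) (auto simp: b0 intro!: less_imp_le lt)
  have "sum_list (comp_of_des n D) = bs ! (m+1)"
    using ps[of "m+1"] by (simp add: C)
  also have "\<dots> = n" using lxs by (simp add: bs_def nth_append)
  finally have "sum_list (comp_of_des n D) = n" .
  moreover have "0 \<notin> set (comp_of_des n D)"
  proof
    assume "0 \<in> set (comp_of_des n D)"
    then have "\<exists>i\<in>{0..<m+1}. 0 = bs ! (i+1) - bs ! i"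
      unfolding C by (simp only: set_map set_upt image_iff)
    then obtain i where "i < m+1" "bs ! (i+1) - bs ! i = 0" by auto
    with lt[of i "i+1"] show False by simp
  qed
  ultimately show "comp_of_des n D \<in> comps n" by (simp add: comps_def)
  have "des (comp_of_des n D) = {bs ! k | k. 1 \<le> k \<and> k < m + 1}"
  proof -
    have "length (comp_of_des n D) = m + 1" by (simp add: C)
    then show ?thesis
      unfolding des_def by (intro Collect_cong ex_cong1) (use ps in auto)
  qed
  also have "\<dots> = {xs ! k | k. k < m}"
  proof (rule set_eqI, rule iffI)
    fix x assume "x \<in> {bs ! k | k. 1 \<le> k \<and> k < m + 1}"
    then obtain k where "1 \<le> k" "k < m+1" "x = bs ! k" by auto
    then show "x \<in> {xs ! k | k. k < m}" using lxs
      by (auto simp: bs_def nth_append intro!: exI[of _ "k - 1"] split: nat.splits)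
  next
    fix x assume "x \<in> {xs ! k | k. k < m}"
    then obtain k where "k < m" "x = xs ! k" by auto
    then show "x \<in> {bs ! k | k. 1 \<le> k \<and> k < m + 1}" using lxs
      by (auto simp: bs_def nth_append intro!: exI[of _ "Suc k"])
  qed
  also have "\<dots> = D" using lxs sxs by (auto simp: in_set_conv_nth)
  finally show "des (comp_of_des n D) = D" .
qed

lemma compl_comp_correct:
  assumes "n \<ge> 1"
  shows "compl_comp n I \<in> comps n" "des (compl_comp n I) = {1..<n} - des I"
  using comp_of_des_correct[of "{1..<n} - des I" n] assms by (auto simp: compl_comp_def)

lemma des_hook: "0 < m \<Longrightarrow> des (replicate k 1 @ [m]) = {1..k}"
proof (induction k)
  case (Suc k)
  then have "des (replicate (Suc k) 1 @ [m]) = insert 1 ((+) 1 ` {1..k})"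
    by (simp add: des_Cons)
  also have "\<dots> = {1..Suc k}"
    by (auto simp: image_iff)
  finally show ?case .
qed (simp add: des_def)

lemma hook_in_comps: "k < n \<Longrightarrow> replicate k 1 @ [n - k] \<in> comps n"
  by (auto simp: comps_def sum_list_replicate)

lemma length_le_sum_list: "0 \<notin> set I \<Longrightarrow> length I \<le> sum_list I"
  by (induction I) auto

lemma finite_comps: "finite (comps n)"
proof -
  have "comps n \<subseteq> {xs. set xs \<subseteq> {0..n} \<and> length xs \<le> n}"
    using length_le_sum_list member_le_sum_list by (fastforce simp: comps_def)
  then show ?thesis using finite_lists_length_le[of "{0..n}" n] finite_subset by blast
qed

section \<open>Statistics of words and permutations\<close>

text \<open>Positions are counted from 0 and position 0 is left out, so that the left-to-right maxima
  of a permutation are exactly the descents of its \<open>SC\<close>.\<close>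

definition ltr_maxima :: "'a::linorder list \<Rightarrow> nat set" where
  "ltr_maxima s = {p. 1 \<le> p \<and> p < length s \<and> (\<forall>q<p. s ! q < s ! p)}"

definition non_ltr_maxima :: "'a::linorder list \<Rightarrow> nat set" where
  "non_ltr_maxima s = {1..<length s} - ltr_maxima s"

definition precedes :: "'a list \<Rightarrow> 'a \<Rightarrow> 'a \<Rightarrow> bool" where
  "precedes s a b \<longleftrightarrow> (\<exists>j k. j < k \<and> k < length s \<and> s ! j = a \<and> s ! k = b)"

definition recoils :: "nat \<Rightarrow> nat list \<Rightarrow> nat set" where
  "recoils n s = {i \<in> {1..<n}. precedes s (i + 1) i}"

definition dom_factors :: "nat list list \<Rightarrow> bool" where
  "dom_factors us \<longleftrightarrow> (\<forall>u\<in>set us. init_dom u) \<and> sorted_wrt (<) (map hd us)"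

lemma RC_eq_comp_of_des_recoils: "RC n s = comp_of_des n (recoils n s)"
  by (simp add: RC_def recoils_def precedes_def)

lemma recoils_subset: "recoils n s \<subseteq> {1..<n}"
  by (auto simp: recoils_def)

lemma ltr_maxima_subset: "ltr_maxima s \<subseteq> {1..<length s}"
  by (auto simp: ltr_maxima_def)

lemma dom_factors_snoc:
  "dom_factors (us @ [u]) \<longleftrightarrow> dom_factors us \<and> init_dom u \<and> (\<forall>v\<in>set us. hd v < hd u)"
  by (auto simp: dom_factors_def sorted_wrt_append)

lemma init_dom_le_hd:
  assumes "init_dom u" "x \<in> set u"
  shows "x \<le> hd u"
proof -
  obtain j where j: "j < length u" "u ! j = x" using assms(2) by (auto simp: in_set_conv_nth)
  then have "j = 0 \<or> u ! j < u ! 0" using assms(1) unfolding init_dom_def by (cases j) auto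
  moreover have "u \<noteq> []" using j by auto
  ultimately show ?thesis using j by (auto simp: hd_conv_nth)
qed

lemma dom_factors_le_hd_last:
  "dom_factors us \<Longrightarrow> x \<in> set (concat us) \<Longrightarrow> x \<le> hd (last us)"
proof (induction us arbitrary: x rule: rev_induct)
  case (snoc u us)
  have us: "dom_factors us" "init_dom u" "\<forall>v\<in>set us. hd v < hd u"
    using snoc.prems dom_factors_snoc by auto
  show ?case
  proof (cases "x \<in> set u")
    case True
    then show ?thesis using init_dom_le_hd us by simp
  next
    case False
    then have "x \<in> set (concat us)" using snoc.prems by auto
    then have "us \<noteq> []" "x \<le> hd (last us)" using snoc.IH us(1) by auto
    moreover have "hd (last us) < hd u" using us \<open>us \<noteq> []\<close> by simp
    ultimately show ?thesis by simp
  qed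
qed simp

lemma ltr_maxima_append_init_dom:
  assumes "init_dom u" "\<forall>a\<in>set xs. a < hd u"
  shows "ltr_maxima (xs @ u) = ltr_maxima xs \<union> (if xs = [] then {} else {length xs})"
proof (rule set_eqI)
  fix p
  have u0: "u \<noteq> []" "hd u = u ! 0" using assms(1) by (auto simp: init_dom_def hd_conv_nth)
  show "p \<in> ltr_maxima (xs @ u) \<longleftrightarrow> p \<in> ltr_maxima xs \<union> (if xs = [] then {} else {length xs})"
  proof (cases "p < length xs")
    case True
    then show ?thesis by (auto simp: ltr_maxima_def nth_append)
  next
    case False
    then obtain r where r: "p = length xs + r" using le_Suc_ex not_less by blast
    show ?thesis
    proof (cases r)
      case 0
      then have "\<forall>q<p. (xs @ u) ! q < (xs @ u) ! p"
        using r assms(2) u0 by (auto simp: nth_append)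
      then show ?thesis using r 0 u0 by (auto simp: ltr_maxima_def Suc_le_eq)
    next
      case (Suc r')
      have "p \<notin> ltr_maxima (xs @ u)"
      proof
        assume p: "p \<in> ltr_maxima (xs @ u)"
        then have "u ! r < u ! 0" using assms(1) r Suc by (simp add: ltr_maxima_def init_dom_def)
        moreover have "(xs @ u) ! length xs < (xs @ u) ! p" using p r Suc by (simp add: ltr_maxima_def)
        ultimately show False using r by (simp add: nth_append)
      qed
      then show ?thesis using r Suc by (auto simp: ltr_maxima_def)
    qed
  qed
qed

lemma des_map_length_dom_factors:
  "dom_factors us \<Longrightarrow> des (map length us) = ltr_maxima (concat us)"
proof (induction us rule: rev_induct)
  case (snoc u us)
  have us: "dom_factors us" "init_dom u" "\<forall>v\<in>set us. hd v < hd u"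
    using snoc.prems dom_factors_snoc by auto
  have "\<forall>a\<in>set (concat us). a < hd u"
  proof
    fix a assume a: "a \<in> set (concat us)"
    then have "us \<noteq> []" by auto
    then show "a < hd u"
      using dom_factors_le_hd_last[OF us(1) a] us(3) by (meson last_in_set le_less_trans)
  qed
  then have "ltr_maxima (concat us @ u) =
      ltr_maxima (concat us) \<union> (if concat us = [] then {} else {length (concat us)})"
    using ltr_maxima_append_init_dom us(2) by blast
  moreover have "concat us = [] \<longleftrightarrow> us = []"
    using us(1) by (auto simp: dom_factors_def init_dom_def)
  ultimately show ?case using snoc.IH us(1) by (simp add: des_snoc length_concat)
qed (simp add: ltr_maxima_def)

lemma dom_factors_exists: "distinct s \<Longrightarrow> \<exists>us. concat us = s \<and> dom_factors us"
proof (induction s rule: rev_induct)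
  case Nil
  then show ?case by (intro exI[of _ "[]"]) (simp add: dom_factors_def)
next
  case (snoc x xs)
  then obtain us where us: "concat us = xs" "dom_factors us" by auto
  have ne: "\<forall>v\<in>set us. v \<noteq> []" using us(2) by (auto simp: dom_factors_def init_dom_def)
  show ?case
  proof (cases "us = [] \<or> hd (last us) < x")
    case True
    have "\<forall>v\<in>set us. hd v < x"
    proof
      fix v assume v: "v \<in> set us"
      then have "us \<noteq> []" "hd v \<in> set (concat us)" using ne by (auto intro!: bexI[of _ v])
      then show "hd v < x" using True dom_factors_le_hd_last[OF us(2)] by (meson le_less_trans)
    qed
    then have "dom_factors (us @ [[x]])"
      using us(2) by (simp add: dom_factors_snoc init_dom_def)
    then show ?thesis using us by (intro exI[of _ "us @ [[x]]"]) simp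
  next
    case False
    obtain vs u where vs: "us = vs @ [u]" using False by (metis rev_exhaust)
    have "hd u \<in> set xs" using ne vs us(1) by auto
    moreover have "x \<notin> set xs" using snoc.prems by simp
    ultimately have "x < hd u" using False vs by (metis last_snoc le_neq_implies_less not_less)
    moreover have vu: "dom_factors vs" "init_dom u" "\<forall>v\<in>set vs. hd v < hd u"
      using us(2) vs dom_factors_snoc by auto
    ultimately have "init_dom (u @ [x])" "hd (u @ [x]) = hd u"
      by (auto simp: init_dom_def nth_append hd_conv_nth)
    then have "dom_factors (vs @ [u @ [x]])" using vu dom_factors_snoc by auto
    then show ?thesis using us vs by (intro exI[of _ "vs @ [u @ [x]]"]) simp
  qed
qed

lemma concat_eq_map_length_eq_imp_eq:
  "concat us = concat vs \<Longrightarrow> map length us = map length vs \<Longrightarrow> us = vs"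
proof (induction us arbitrary: vs)
  case (Cons u us)
  then show ?case by (cases vs) auto
qed simp

lemma dom_factors_in_comps: "dom_factors us \<Longrightarrow> map length us \<in> comps (length (concat us))"
  by (auto simp: comps_def dom_factors_def init_dom_def length_concat)

lemma SC_eq_map_length:
  assumes "concat us = s" "dom_factors us"
  shows "SC s = map length us"
proof -
  have "(THE us. concat us = s \<and> (\<forall>u\<in>set us. init_dom u) \<and> sorted_wrt (<) (map hd us)) = us"
  proof (rule the_equality)
    fix vs assume "concat vs = s \<and> (\<forall>u\<in>set vs. init_dom u) \<and> sorted_wrt (<) (map hd vs)"
    then have vs: "concat vs = s" "dom_factors vs" by (simp_all add: dom_factors_def)
    have "length (concat vs) = length s" "length (concat us) = length s"
      using vs assms by simp_all
    then have m: "map length vs \<in> comps (length s)" "map length us \<in> comps (length s)"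
      using dom_factors_in_comps[OF vs(2)] dom_factors_in_comps[OF assms(2)] by simp_all
    have "des (map length vs) = des (map length us)"
      using des_map_length_dom_factors vs assms by simp
    then have "map length vs = map length us" by (rule inj_onD[OF inj_on_des _ m])
    then show "vs = us" using concat_eq_map_length_eq_imp_eq[of vs us] vs(1) assms(1) by simp
  qed (use assms in \<open>simp add: dom_factors_def\<close>)
  then show ?thesis by (simp add: SC_def)
qed

lemma SC_correct:
  assumes "distinct s"
  shows "SC s \<in> comps (length s)" "des (SC s) = ltr_maxima s"
proof -
  obtain us where "concat us = s" "dom_factors us" using dom_factors_exists assms by blast
  then show "SC s \<in> comps (length s)" "des (SC s) = ltr_maxima s"
    using SC_eq_map_length dom_factors_in_comps des_map_length_dom_factors by auto
qed

definition pos :: "'a list \<Rightarrow> 'a \<Rightarrow> nat" where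
  "pos s v = (LEAST i. i < length s \<and> s ! i = v)"

lemma pos_correct:
  assumes "v \<in> set s"
  shows "pos s v < length s" "s ! pos s v = v"
proof -
  have "pos s v < length s \<and> s ! pos s v = v"
    unfolding pos_def by (rule LeastI_ex) (use assms in \<open>simp add: in_set_conv_nth\<close>)
  then show "pos s v < length s" "s ! pos s v = v" by simp_all
qed

lemma pos_nth: "distinct s \<Longrightarrow> i < length s \<Longrightarrow> pos s (s ! i) = i"
  unfolding pos_def by (rule Least_equality) (auto simp: nth_eq_iff_index_eq leI)

lemma pos_inj:
  assumes "a \<in> set s" "b \<in> set s" "pos s a = pos s b"
  shows "a = b"
proof -
  have "a = s ! pos s a" using pos_correct(2)[OF assms(1)] by simp
  also have "\<dots> = s ! pos s b" using assms(3) by simp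
  also have "\<dots> = b" using pos_correct(2)[OF assms(2)] .
  finally show ?thesis .
qed

lemma precedes_iff_pos_less:
  assumes "distinct s" "a \<in> set s" "b \<in> set s"
  shows "precedes s a b \<longleftrightarrow> pos s a < pos s b"
proof
  assume "precedes s a b"
  then obtain j k where "j < k" "k < length s" "s ! j = a" "s ! k = b"
    by (auto simp: precedes_def)
  then show "pos s a < pos s b" using pos_nth[OF assms(1), of j] pos_nth[OF assms(1), of k] by auto
next
  assume "pos s a < pos s b"
  then show "precedes s a b"
    unfolding precedes_def using pos_correct[OF assms(2)] pos_correct[OF assms(3)]
    by (intro exI[of _ "pos s a"] exI[of _ "pos s b"] conjI) assumption+
qed

lemma precedes_imp_in_set: "precedes s a b \<Longrightarrow> a \<in> set s \<and> b \<in> set s"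
  by (auto simp: precedes_def)

lemma not_precedes_singleton [simp]: "\<not> precedes [x] a b"
  by (auto simp: precedes_def)

lemma precedes_append:
  "precedes (xs @ ys) a b \<longleftrightarrow> precedes xs a b \<or> precedes ys a b \<or> (a \<in> set xs \<and> b \<in> set ys)"
proof
  assume "precedes (xs @ ys) a b"
  then obtain j k where jk: "j < k" "k < length (xs @ ys)" "(xs @ ys) ! j = a" "(xs @ ys) ! k = b"
    by (auto simp: precedes_def)
  consider "k < length xs" | "j < length xs" "\<not> k < length xs" | "\<not> j < length xs"
    using jk(1) by linarith
  then show "precedes xs a b \<or> precedes ys a b \<or> (a \<in> set xs \<and> b \<in> set ys)"
  proof cases
    case 1
    then show ?thesis using jk unfolding precedes_def by (auto simp: nth_append)
  next
    case 2
    then show ?thesis using jk by (auto simp: nth_append)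
  next
    case 3
    then have "precedes ys a b" unfolding precedes_def using jk
      by (intro exI[of _ "j - length xs"] exI[of _ "k - length xs"]) (auto simp: nth_append)
    then show ?thesis by simp
  qed
next
  assume "precedes xs a b \<or> precedes ys a b \<or> (a \<in> set xs \<and> b \<in> set ys)"
  then show "precedes (xs @ ys) a b"
  proof (elim disjE)
    assume "precedes xs a b"
    then obtain j k where "j < k" "k < length xs" "xs ! j = a" "xs ! k = b"
      by (auto simp: precedes_def)
    then show ?thesis unfolding precedes_def
      by (intro exI[of _ j] exI[of _ k]) (auto simp: nth_append)
  next
    assume "precedes ys a b"
    then obtain j k where "j < k" "k < length ys" "ys ! j = a" "ys ! k = b"
      by (auto simp: precedes_def)
    then show ?thesis unfolding precedes_def
      by (intro exI[of _ "length xs + j"] exI[of _ "length xs + k"]) (auto simp: nth_append)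
  next
    assume "a \<in> set xs \<and> b \<in> set ys"
    then obtain j k where "j < length xs" "xs ! j = a" "k < length ys" "ys ! k = b"
      by (auto simp: in_set_conv_nth)
    then show ?thesis unfolding precedes_def
      by (intro exI[of _ j] exI[of _ "length xs + k"]) (auto simp: nth_append)
  qed
qed

lemma precedes_rev_upt: "precedes (rev [lo..<hi]) a b \<longleftrightarrow> lo \<le> b \<and> b < a \<and> a < hi"
proof
  assume "precedes (rev [lo..<hi]) a b"
  then obtain j k where jk: "j < k" "k < hi - lo" "rev [lo..<hi] ! j = a" "rev [lo..<hi] ! k = b"
    by (auto simp: precedes_def)
  then have "a = hi - 1 - j" "b = hi - 1 - k" by (auto simp: rev_nth)
  then show "lo \<le> b \<and> b < a \<and> a < hi" using jk by auto
next
  assume "lo \<le> b \<and> b < a \<and> a < hi"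
  then show "precedes (rev [lo..<hi]) a b" unfolding precedes_def
    by (intro exI[of _ "hi - 1 - a"] exI[of _ "hi - 1 - b"]) (auto simp: rev_nth)
qed

lemma precedes_map:
  assumes "inj f"
  shows "precedes (map f xs) (f a) (f b) \<longleftrightarrow> precedes xs a b"
proof
  assume "precedes (map f xs) (f a) (f b)"
  then obtain j k where "j < k" "k < length xs" "f (xs ! j) = f a" "f (xs ! k) = f b"
    by (auto simp: precedes_def)
  then show "precedes xs a b"
    unfolding precedes_def using assms by (intro exI[of _ j] exI[of _ k]) (simp add: inj_eq)
next
  assume "precedes xs a b"
  then obtain j k where "j < k" "k < length xs" "xs ! j = a" "xs ! k = b"
    by (auto simp: precedes_def)
  then show "precedes (map f xs) (f a) (f b)"
    unfolding precedes_def by (intro exI[of _ j] exI[of _ k]) simp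
qed

lemma ltr_maxima_map:
  assumes "strict_mono f"
  shows "ltr_maxima (map f xs) = ltr_maxima xs"
  using assms by (auto simp: ltr_maxima_def strict_mono_less)

lemma ltr_maxima_snoc_less_hd:
  assumes "xs \<noteq> []" "x < hd xs"
  shows "ltr_maxima (xs @ [x]) = ltr_maxima xs"
proof (rule set_eqI)
  fix p
  show "p \<in> ltr_maxima (xs @ [x]) \<longleftrightarrow> p \<in> ltr_maxima xs"
  proof (cases "p < length xs")
    case True
    then show ?thesis by (auto simp: ltr_maxima_def nth_append)
  next
    case False
    have "p \<notin> ltr_maxima (xs @ [x])"
    proof
      assume p: "p \<in> ltr_maxima (xs @ [x])"
      then have "p = length xs" using False by (auto simp: ltr_maxima_def)
      then have "xs ! 0 < x" using p assms(1) by (auto simp: ltr_maxima_def nth_append)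
      then show False using assms by (simp add: hd_conv_nth)
    qed
    then show ?thesis using False by (auto simp: ltr_maxima_def)
  qed
qed

lemma permsD:
  assumes "s \<in> perms n"
  shows "set s = {1..n}" "distinct s" "length s = n"
  using assms distinct_card[of s] by (auto simp: perms_def permutations_of_set_def)

lemma perms_iff: "s \<in> perms n \<longleftrightarrow> set s = {1..n} \<and> distinct s"
  by (simp add: perms_def permutations_of_set_def)

lemma SC_eq_compl_comp_iff:
  assumes "s \<in> perms n" "J \<in> comps n" "n \<ge> 1"
  shows "SC s = compl_comp n J \<longleftrightarrow> non_ltr_maxima s = des J"
proof -
  have c: "compl_comp n J \<in> comps n" "des (compl_comp n J) = {1..<n} - des J"
    using compl_comp_correct assms(3) by auto
  have sc: "SC s \<in> comps n" "des (SC s) = ltr_maxima s"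
    using SC_correct permsD[OF assms(1)] by auto
  have "des J \<subseteq> {1..<n}" using des_subset_comps assms(2) .
  then have "ltr_maxima s = {1..<n} - des J \<longleftrightarrow> non_ltr_maxima s = des J"
    using ltr_maxima_subset[of s] permsD[OF assms(1)] unfolding non_ltr_maxima_def by auto
  then show ?thesis using inj_onD[OF inj_on_des _ sc(1) c(1)] sc c by auto
qed

lemma RC_eq_iff:
  assumes "K \<in> comps n" "n \<ge> 1"
  shows "RC n s = K \<longleftrightarrow> recoils n s = des K"
proof -
  have "RC n s \<in> comps n" "des (RC n s) = recoils n s"
    using comp_of_des_correct[OF recoils_subset assms(2)] by (auto simp: RC_eq_comp_of_des_recoils)
  then show ?thesis using inj_onD[OF inj_on_des _ _ assms(1)] by auto
qed

lemma U_eq_card: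
  assumes "J \<in> comps n" "K \<in> comps n" "n \<ge> 1"
  shows "U n J K = of_nat (card {s \<in> perms n. non_ltr_maxima s = des J \<and> recoils n s = des K})"
proof -
  have "{s \<in> perms n. SC s = compl_comp n J \<and> RC n s = K} =
      {s \<in> perms n. non_ltr_maxima s = des J \<and> recoils n s = des K}"
    using SC_eq_compl_comp_iff[OF _ assms(1,3)] RC_eq_iff[OF assms(2,3)] by blast
  then show ?thesis by (simp add: U_def)
qed

section \<open>Triangularity of \<open>U\<close>\<close>

lemma exists_ascent:
  fixes f :: "nat \<Rightarrow> 'a::linorder"
  assumes "a < b" "f a < f b"
  shows "\<exists>v. a \<le> v \<and> v < b \<and> f v < f (Suc v)"
  using assms
proof (induction b)
  case (Suc b)
  show ?case
  proof (cases "f b < f (Suc b)")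
    case True
    then show ?thesis using Suc.prems by (intro exI[of _ b]) auto
  next
    case False
    then have "a \<noteq> b" using Suc.prems(2) by auto
    then have "a < b" using Suc.prems(1) by simp
    moreover have "f a < f b" using False Suc.prems(2) by (meson leI less_le_trans)
    ultimately obtain v where "a \<le> v" "v < b" "f v < f (Suc v)" using Suc.IH by blast
    then show ?thesis by (intro exI[of _ v]) simp
  qed
qed simp

lemma ltr_max_ascent:
  assumes s: "s \<in> perms n" and p: "p \<in> ltr_maxima s"
  shows "\<exists>v. p \<le> v \<and> (\<forall>q<p. s ! q \<le> v) \<and> v < s ! p \<and> pos s v < pos s (Suc v)"
proof -
  have sp: "set s = {1..n}" "distinct s" "length s = n" using permsD[OF s] by auto
  have p: "1 \<le> p" "p < n" "\<forall>q<p. s ! q < s ! p" using p sp by (auto simp: ltr_maxima_def)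
  define M where "M = Max ((!) s ` {..<p})"
  have M_ge: "\<forall>q<p. s ! q \<le> M" unfolding M_def by (intro allI impI Max_ge) auto
  have "0 \<in> {..<p}" using p(1) by simp
  then have "M \<in> (!) s ` {..<p}" unfolding M_def by (intro Max_in) auto
  then obtain q where q: "q < p" "s ! q = M" by auto
  have "p \<le> M"
  proof -
    have "card ((!) s ` {..<p}) = p"
      using p sp by (subst card_image) (auto intro!: inj_on_nth)
    moreover have "(!) s ` {..<p} \<subseteq> {1..M}"
      using M_ge p(2) sp by (auto simp flip: sp(1))
    ultimately show ?thesis by (metis card_atLeastAtMost card_mono diff_Suc_1 finite_atLeastAtMost)
  qed
  moreover have "pos s M < pos s (s ! p)"
    using pos_nth[OF sp(2), of q] pos_nth[OF sp(2), of p] sp(3) q p by simp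
  then obtain v where "M \<le> v" "v < s ! p" "pos s v < pos s (Suc v)"
    using exists_ascent[of M "s ! p" "pos s"] p q by auto
  ultimately show ?thesis using M_ge by (intro exI[of _ v]) auto
qed

text \<open>The ascents provided by \<open>ltr_max_ascent\<close> inject the left-to-right maxima at positions
  \<open>\<ge> t\<close> into the non-recoils \<open>\<ge> t\<close>.\<close>

lemma card_recoils_tail_le:
  assumes s: "s \<in> perms n" and t: "t \<ge> 1"
  shows "card (recoils n s \<inter> {t..}) \<le> card (non_ltr_maxima s \<inter> {t..})"
proof -
  have sp: "set s = {1..n}" "distinct s" "length s = n" using permsD[OF s] by auto
  define T where "T = {t..<n}"
  define A where "A = {v \<in> T. pos s v < pos s (Suc v)}"
  define L where "L = ltr_maxima s \<inter> T"
  have "recoils n s \<inter> {t..} = T - A"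
  proof (rule set_eqI)
    fix v
    show "v \<in> recoils n s \<inter> {t..} \<longleftrightarrow> v \<in> T - A"
    proof (cases "v \<in> T")
      case True
      then have vs: "v \<in> set s" "Suc v \<in> set s" using sp t by (auto simp: T_def)
      then have "pos s v \<noteq> pos s (Suc v)" using pos_inj[OF vs] by auto
      then have "precedes s (v + 1) v \<longleftrightarrow> \<not> pos s v < pos s (Suc v)"
        using precedes_iff_pos_less[OF sp(2) vs(2) vs(1)] by auto
      then show ?thesis using True t by (auto simp: recoils_def T_def A_def)
    qed (auto simp: recoils_def T_def)
  qed
  moreover have "non_ltr_maxima s \<inter> {t..} = T - L"
    using sp(3) t by (auto simp: non_ltr_maxima_def L_def T_def ltr_maxima_def)
  moreover have "card L \<le> card A"
  proof -
    have "\<forall>p\<in>L. \<exists>v. p \<le> v \<and> (\<forall>q<p. s ! q \<le> v) \<and> v < s ! p \<and> pos s v < pos s (Suc v)"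
      using ltr_max_ascent[OF s] by (auto simp: L_def)
    then obtain g where g: "\<And>p. p \<in> L \<Longrightarrow>
        p \<le> g p \<and> (\<forall>q<p. s ! q \<le> g p) \<and> g p < s ! p \<and> pos s (g p) < pos s (Suc (g p))"
      by metis
    have "inj_on g L"
    proof (rule linorder_inj_onI)
      fix p p' assume "p < p'" "p \<in> L" "p' \<in> L"
      then have "g p < s ! p" "s ! p \<le> g p'" using g by auto
      then show "g p \<noteq> g p'" by simp
    qed auto
    moreover have "g ` L \<subseteq> A"
    proof
      fix x assume "x \<in> g ` L"
      then obtain p where p: "p \<in> L" "x = g p" by auto
      then have "p < n" "t \<le> p" by (auto simp: L_def T_def)
      moreover have "s ! p \<le> n" using sp \<open>p < n\<close> by (metis atLeastAtMost_iff nth_mem)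
      ultimately show "x \<in> A" using g[OF p(1)] p by (auto simp: A_def T_def)
    qed
    ultimately show ?thesis by (intro card_inj_on_le) (auto simp: A_def T_def)
  qed
  moreover have "A \<subseteq> T" "L \<subseteq> T" "finite T" by (auto simp: A_def L_def T_def)
  ultimately show ?thesis by (simp add: card_Diff_subset finite_subset)
qed

lemma card_tail_Suc:
  fixes X :: "nat set"
  assumes "finite X"
  shows "card (X \<inter> {t..}) = card (X \<inter> {Suc t..}) + (if t \<in> X then 1 else 0)"
proof -
  have "X \<inter> {t..} = (if t \<in> X then insert t (X \<inter> {Suc t..}) else X \<inter> {Suc t..})"
    by (auto simp: Suc_le_eq order.order_iff_strict)
  then show ?thesis using assms by auto
qed

lemma set_eq_if_tail_cards_eq:
  fixes A B :: "nat set"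
  assumes "A \<subseteq> {1..<n}" "B \<subseteq> {1..<n}"
    and "\<And>t. 1 \<le> t \<Longrightarrow> t \<le> n \<Longrightarrow> card (A \<inter> {t..}) = card (B \<inter> {t..})"
  shows "A = B"
proof (rule set_eqI)
  have fin: "finite A" "finite B" using assms(1,2) finite_subset by auto
  fix x
  show "x \<in> A \<longleftrightarrow> x \<in> B"
  proof (cases "1 \<le> x \<and> x < n")
    case True
    then have "card (A \<inter> {x..}) = card (B \<inter> {x..})"
      "card (A \<inter> {Suc x..}) = card (B \<inter> {Suc x..})"
      using assms(3) by auto
    then show ?thesis
      using card_tail_Suc[OF fin(1), of x] card_tail_Suc[OF fin(2), of x]
      by (cases "x \<in> A"; cases "x \<in> B") simp_all
  qed (use assms(1,2) in auto)
qed

definition tail_weight :: "nat \<Rightarrow> nat set \<Rightarrow> nat" where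
  "tail_weight n D = (\<Sum>t=1..n. card (D \<inter> {t..}))"

lemma U_triangular:
  assumes J: "J \<in> comps n" and K: "K \<in> comps n" and n: "n \<ge> 1" and "U n J K \<noteq> 0"
  shows "tail_weight n (des K) < tail_weight n (des J) \<or> K = J"
proof -
  have "{s \<in> perms n. non_ltr_maxima s = des J \<and> recoils n s = des K} \<noteq> {}"
    using assms U_eq_card by fastforce
  then obtain s where s: "s \<in> perms n" "non_ltr_maxima s = des J" "recoils n s = des K"
    by blast
  have le: "card (des K \<inter> {t..}) \<le> card (des J \<inter> {t..})" if "t \<in> {1..n}" for t
    using card_recoils_tail_le[OF s(1)] s that by simp
  show ?thesis
  proof (cases "tail_weight n (des K) < tail_weight n (des J)")
    case False
    have "tail_weight n (des K) \<le> tail_weight n (des J)"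
      unfolding tail_weight_def by (rule sum_mono) (rule le)
    then have eq: "tail_weight n (des K) = tail_weight n (des J)" using False by simp
    have "card (des K \<inter> {t..}) = card (des J \<inter> {t..})" if "t \<in> {1..n}" for t
      by (rule sum_mono_inv[OF eq[unfolded tail_weight_def] le that finite_atLeastAtMost])
    moreover have "des K \<subseteq> {1..<n}" "des J \<subseteq> {1..<n}"
      using des_subset_comps J K by auto
    ultimately have "des K = des J" by (intro set_eq_if_tail_cards_eq) auto
    then show ?thesis using inj_onD[OF inj_on_des _ K J] by blast
  qed simp
qed

text \<open>For \<open>C = (c\<^sub>1, \<dots>, c\<^sub>r)\<close> the witness is the concatenation of the decreasing runs
  \<open>c\<^sub>1 \<dots> 1\<close>, \<open>c\<^sub>1 + c\<^sub>2 \<dots> c\<^sub>1 + 1\<close>, and so on.\<close>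

lemma exists_perm_ltr_maxima_des:
  "0 \<notin> set C \<Longrightarrow> \<exists>s\<in>perms (sum_list C).
     ltr_maxima s = des C \<and> recoils (sum_list C) s = {1..<sum_list C} - des C"
proof (induction C rule: rev_induct)
  case Nil
  then show ?case by (auto simp: perms_def ltr_maxima_def recoils_def)
next
  case (snoc c C)
  define m where "m = sum_list C"
  have c0: "c > 0" "0 \<notin> set C" using snoc.prems by auto
  then obtain s where s: "s \<in> perms m" "ltr_maxima s = des C" "recoils m s = {1..<m} - des C"
    using snoc.IH m_def by auto
  have sp: "set s = {1..m}" "distinct s" "length s = m" using permsD[OF s(1)] by auto
  define u where "u = rev [m+1..<m+c+1]"
  have u: "init_dom u" "hd u = m + c"
    using c0 by (auto simp: u_def init_dom_def rev_nth hd_rev last_upt)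
  have "\<forall>a\<in>set s. a < hd u" using sp u c0 by auto
  have "s = [] \<longleftrightarrow> m = 0" using sp by auto
  also have "\<dots> \<longleftrightarrow> C = []" using c0(2) m_def by (cases C) auto
  finally have "s = [] \<longleftrightarrow> C = []" .
  then have "ltr_maxima (s @ u) = des (C @ [c])"
    using ltr_maxima_append_init_dom[OF u(1) \<open>\<forall>a\<in>set s. a < hd u\<close>] s(2) sp
    by (simp add: des_snoc m_def)
  moreover have "recoils (m + c) (s @ u) = {1..<m+c} - des (C @ [c])"
  proof (rule set_eqI)
    fix i
    have "precedes (s @ u) (i+1) i \<longleftrightarrow> precedes s (i+1) i \<or> (m+1 \<le> i \<and> i+1 < m+c+1)"
      using precedes_append[of s u "i+1" i] precedes_rev_upt[of "m+1" "m+c+1" "i+1" i] sp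
      unfolding u_def by auto
    moreover have "precedes s (i+1) i \<Longrightarrow> i + 1 \<le> m"
      using precedes_imp_in_set[of s "i+1" i] sp by auto
    moreover have "des C \<subseteq> {1..<m}" using des_subset c0 m_def by auto
    ultimately show "i \<in> recoils (m + c) (s @ u) \<longleftrightarrow> i \<in> {1..<m+c} - des (C @ [c])"
      using s(3) \<open>s = [] \<longleftrightarrow> C = []\<close> unfolding recoils_def by (auto simp: des_snoc m_def)
  qed
  moreover have "s @ u \<in> perms (m + c)"
    using sp by (auto simp: perms_iff u_def)
  ultimately show ?case by (auto simp: m_def)
qed

lemma U_diag_nonzero:
  assumes J: "J \<in> comps n" and n: "n \<ge> 1"
  shows "U n J J \<noteq> 0"
proof -
  have c: "compl_comp n J \<in> comps n" "des (compl_comp n J) = {1..<n} - des J"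
    using compl_comp_correct n by auto
  obtain s where s: "s \<in> perms n" "ltr_maxima s = des (compl_comp n J)"
      "recoils n s = {1..<n} - des (compl_comp n J)"
    using exists_perm_ltr_maxima_des[of "compl_comp n J"] c(1) by (auto simp: comps_def)
  have "des J \<subseteq> {1..<n}" "length s = n" using des_subset_comps J permsD[OF s(1)] by auto
  then have "non_ltr_maxima s = des J" "recoils n s = des J"
    using s(2,3) c(2) by (auto simp: non_ltr_maxima_def)
  then have "s \<in> {s \<in> perms n. non_ltr_maxima s = des J \<and> recoils n s = des J}"
    using s(1) by simp
  moreover have "finite (perms n)" by (simp add: perms_def)
  ultimately have "card {s \<in> perms n. non_ltr_maxima s = des J \<and> recoils n s = des J} \<noteq> 0"
    by auto
  then show ?thesis using U_eq_card[OF J J n] by simp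
qed

section \<open>Triangular systems and the dual basis \<open>V\<close>\<close>

lemma triangular_solution_unique:
  fixes M :: "'a \<Rightarrow> 'a \<Rightarrow> 'b::field" and w :: "'a \<Rightarrow> nat"
  assumes fin: "finite C"
    and tri: "\<And>J K. J \<in> C \<Longrightarrow> K \<in> C \<Longrightarrow> M J K \<noteq> 0 \<Longrightarrow> w K < w J \<or> K = J"
    and diag: "\<And>J. J \<in> C \<Longrightarrow> M J J \<noteq> 0"
    and supp: "\<And>K. K \<notin> C \<Longrightarrow> x K = 0"
    and hom: "\<And>J. J \<in> C \<Longrightarrow> (\<Sum>K\<in>C. M J K * x K) = 0"
  shows "x K = 0"
proof (rule ccontr)
  assume "x K \<noteq> 0"
  then have "K \<in> C \<and> x K \<noteq> 0" using supp by blast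
  then obtain K0 where K0: "K0 \<in> C" "x K0 \<noteq> 0"
    and least: "\<And>K. K \<in> C \<Longrightarrow> x K \<noteq> 0 \<Longrightarrow> w K0 \<le> w K"
    using ex_has_least_nat[of "\<lambda>K. K \<in> C \<and> x K \<noteq> 0" K w] by blast
  have zero: "M K0 K * x K = 0" if "K \<in> C - {K0}" for K
  proof (cases "x K = 0")
    case False
    then have "M K0 K = 0" using least tri[of K0 K] K0(1) that by fastforce
    then show ?thesis by simp
  qed simp
  have "(\<Sum>K\<in>C. M K0 K * x K) = M K0 K0 * x K0 + (\<Sum>K\<in>C - {K0}. M K0 K * x K)"
    using fin K0(1) by (simp add: sum.remove)
  also have "(\<Sum>K\<in>C - {K0}. M K0 K * x K) = 0"
    using zero by (intro sum.neutral) blast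
  finally have "(\<Sum>K\<in>C. M K0 K * x K) = M K0 K0 * x K0" by simp
  then show False using hom[OF K0(1)] diag[OF K0(1)] K0(2) by simp
qed

lemma triangular_solution_exists:
  fixes M :: "'a \<Rightarrow> 'a \<Rightarrow> 'b::field" and w :: "'a \<Rightarrow> nat"
  assumes "finite C"
    and "\<And>J K. J \<in> C \<Longrightarrow> K \<in> C \<Longrightarrow> M J K \<noteq> 0 \<Longrightarrow> w K < w J \<or> K = J"
    and "\<And>J. J \<in> C \<Longrightarrow> M J J \<noteq> 0"
  shows "\<exists>x. (\<forall>K. K \<notin> C \<longrightarrow> x K = 0) \<and> (\<forall>J\<in>C. (\<Sum>K\<in>C. M J K * x K) = b J)"
  using assms
proof (induction C rule: finite_ranking_induct[where f = w])
  case empty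
  show ?case by (intro exI[of _ "\<lambda>_. 0"]) simp
next
  case (insert a S)
  note tri = insert.prems(1) and diag = insert.prems(2)
  show ?case
  proof (cases "a \<in> S")
    case True
    then show ?thesis using insert by (simp add: insert_absorb)
  next
    case False
    obtain x where x: "\<forall>K. K \<notin> S \<longrightarrow> x K = 0" "\<forall>J\<in>S. (\<Sum>K\<in>S. M J K * x K) = b J"
      using insert.IH tri diag by blast
    \<comment> \<open>\<open>a\<close> has maximal weight, so its column vanishes on the rows of \<open>S\<close>\<close>
    have col: "M J a = 0" if "J \<in> S" for J
      using tri[of J a] insert.hyps(2)[OF that] False that by fastforce
    define y where "y = x(a := (b a - (\<Sum>K\<in>S. M a K * x K)) / M a a)"
    have sum_y: "(\<Sum>K\<in>insert a S. M J K * y K) = M J a * y a + (\<Sum>K\<in>S. M J K * x K)" for J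
    proof -
      have "(\<Sum>K\<in>S. M J K * y K) = (\<Sum>K\<in>S. M J K * x K)"
        using False by (intro sum.cong) (auto simp: y_def)
      then show ?thesis using insert.hyps(1) False by simp
    qed
    have "(\<Sum>K\<in>insert a S. M J K * y K) = b J" if "J \<in> insert a S" for J
    proof (cases "J = a")
      case True
      have "y a = (b a - (\<Sum>K\<in>S. M a K * x K)) / M a a" by (simp add: y_def)
      then show ?thesis using sum_y[of a] True diag[of a] by (simp add: field_simps)
    next
      case False
      then show ?thesis using sum_y[of J] col x(2) that by simp
    qed
    moreover have "\<forall>K. K \<notin> insert a S \<longrightarrow> y K = 0" using x(1) by (simp add: y_def)
    ultimately show ?thesis by blast
  qed
qed

lemma triangular_system_ex1:
  fixes M :: "'a \<Rightarrow> 'a \<Rightarrow> 'b::field" and w :: "'a \<Rightarrow> nat"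
  assumes fin: "finite C"
    and tri: "\<And>J K. J \<in> C \<Longrightarrow> K \<in> C \<Longrightarrow> M J K \<noteq> 0 \<Longrightarrow> w K < w J \<or> K = J"
    and diag: "\<And>J. J \<in> C \<Longrightarrow> M J J \<noteq> 0"
  shows "\<exists>!x. (\<forall>K. K \<notin> C \<longrightarrow> x K = 0) \<and> (\<forall>J\<in>C. (\<Sum>K\<in>C. M J K * x K) = b J)"
proof (rule ex_ex1I)
  show "\<exists>x. (\<forall>K. K \<notin> C \<longrightarrow> x K = 0) \<and> (\<forall>J\<in>C. (\<Sum>K\<in>C. M J K * x K) = b J)"
    using triangular_solution_exists[OF assms] .
next
  fix x y
  assume x: "(\<forall>K. K \<notin> C \<longrightarrow> x K = 0) \<and> (\<forall>J\<in>C. (\<Sum>K\<in>C. M J K * x K) = b J)"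
    and y: "(\<forall>K. K \<notin> C \<longrightarrow> y K = 0) \<and> (\<forall>J\<in>C. (\<Sum>K\<in>C. M J K * y K) = b J)"
  have "x K - y K = 0" for K
  proof (rule triangular_solution_unique[OF fin tri diag])
    fix J assume "J \<in> C"
    then show "(\<Sum>K\<in>C. M J K * (x K - y K)) = 0"
      using x y by (simp add: right_diff_distrib sum_subtractf)
  qed (use x y in auto)
  then show "x = y" by auto
qed

lemma U_system_ex1:
  assumes "n \<ge> 1"
  shows "\<exists>!v. (\<forall>K. K \<notin> comps n \<longrightarrow> v K = 0) \<and> (\<forall>J\<in>comps n. pair n (U n J) v = b J)"
  unfolding pair_def
proof (rule triangular_system_ex1[where w = "\<lambda>K. tail_weight n (des K)"])
  fix J K assume "J \<in> comps n" "K \<in> comps n" "U n J K \<noteq> 0"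
  then show "tail_weight n (des K) < tail_weight n (des J) \<or> K = J"
    by (rule U_triangular[OF _ _ assms])
qed (use finite_comps U_diag_nonzero assms in blast)+

lemma V_dual:
  assumes "n \<ge> 1"
  shows "K \<notin> comps n \<Longrightarrow> V n I K = 0"
    and "J \<in> comps n \<Longrightarrow> pair n (U n J) (V n I) = (if J = I then 1 else 0)"
proof -
  have "(\<forall>K. K \<notin> comps n \<longrightarrow> V n I K = 0) \<and>
      (\<forall>J\<in>comps n. pair n (U n J) (V n I) = (if J = I then 1 else 0))"
    unfolding V_def by (rule theI'[OF U_system_ex1[OF assms]])
  then show "K \<notin> comps n \<Longrightarrow> V n I K = 0"
    and "J \<in> comps n \<Longrightarrow> pair n (U n J) (V n I) = (if J = I then 1 else 0)"
    by auto
qed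

lemma expansion_in_V:
  assumes n: "n \<ge> 1" and supp: "\<And>K. K \<notin> comps n \<Longrightarrow> v K = 0"
  shows "v = (\<lambda>K. \<Sum>I\<in>comps n. pair n (U n I) v * V n I K)"
proof -
  define w where "w = (\<lambda>K. \<Sum>I\<in>comps n. pair n (U n I) v * V n I K)"
  define P where "P x \<longleftrightarrow> (\<forall>K. K \<notin> comps n \<longrightarrow> x K = 0) \<and>
      (\<forall>J\<in>comps n. pair n (U n J) x = pair n (U n J) v)" for x
  have ex1: "\<exists>!x. P x" unfolding P_def by (rule U_system_ex1[OF n])
  have "pair n (U n J) w = pair n (U n J) v" if J: "J \<in> comps n" for J
  proof -
    have "pair n (U n J) w =
        (\<Sum>K\<in>comps n. \<Sum>I\<in>comps n. U n J K * (pair n (U n I) v * V n I K))"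
      by (simp add: pair_def w_def sum_distrib_left)
    also have "\<dots> = (\<Sum>I\<in>comps n. \<Sum>K\<in>comps n. U n J K * (pair n (U n I) v * V n I K))"
      by (rule sum.swap)
    also have "\<dots> = (\<Sum>I\<in>comps n. pair n (U n I) v * pair n (U n J) (V n I))"
      by (simp add: pair_def sum_distrib_left mult.left_commute)
    also have "\<dots> = (\<Sum>I\<in>comps n. if I = J then pair n (U n I) v else 0)"
      using V_dual(2)[OF n J] by (intro sum.cong) auto
    also have "\<dots> = pair n (U n J) v"
      using finite_comps J by (simp add: sum.delta')
    finally show ?thesis .
  qed
  moreover have "w K = 0" if "K \<notin> comps n" for K
    using V_dual(1)[OF n that] by (simp add: w_def)
  ultimately have "P w" by (simp add: P_def)
  moreover have "P v" using supp by (simp add: P_def)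
  ultimately have "v = w" using the1_equality[OF ex1] by metis
  then show ?thesis by (simp add: w_def)
qed

section \<open>Hook permutations and the pairing with \<open>\<Psi>\<^sub>n\<close>\<close>

lemma perm_snoc_max:
  assumes s: "s \<in> perms n"
  shows "s @ [Suc n] \<in> perms (Suc n)"
    and "recoils (Suc n) (s @ [Suc n]) = recoils n s"
    and "non_ltr_maxima (s @ [Suc n]) = non_ltr_maxima s"
proof -
  have sp: "set s = {1..n}" "distinct s" "length s = n" using permsD[OF s] by auto
  show "s @ [Suc n] \<in> perms (Suc n)" using sp by (auto simp: perms_iff)
  have "precedes (s @ [Suc n]) (i + 1) i \<longleftrightarrow> precedes s (i + 1) i" for i
    using precedes_append[of s "[Suc n]" "i + 1" i] sp by auto
  moreover have "precedes s (i + 1) i \<Longrightarrow> i < n" for i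
    using precedes_imp_in_set[of s "i + 1" i] sp by auto
  ultimately show "recoils (Suc n) (s @ [Suc n]) = recoils n s"
    unfolding recoils_def by (auto simp: less_Suc_eq)
  have "ltr_maxima (s @ [Suc n]) = ltr_maxima s \<union> (if s = [] then {} else {n})"
    using ltr_maxima_append_init_dom[of "[Suc n]" s] sp by (auto simp: init_dom_def)
  then show "non_ltr_maxima (s @ [Suc n]) = non_ltr_maxima s"
    using ltr_maxima_subset[of s] sp(3) by (auto simp: non_ltr_maxima_def)
qed

lemma perm_shift_snoc_one:
  assumes s: "s \<in> perms n" and n: "n \<ge> 1"
  shows "map Suc s @ [1] \<in> perms (Suc n)"
    and "recoils (Suc n) (map Suc s @ [1]) = insert 1 (Suc ` recoils n s)"
    and "non_ltr_maxima (map Suc s @ [1]) = insert n (non_ltr_maxima s)"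
proof -
  have sp: "set s = {1..n}" "distinct s" "length s = n" using permsD[OF s] by auto
  have "set (map Suc s @ [1]) = insert 1 (Suc ` {1..n})" using sp by simp
  also have "\<dots> = {1..Suc n}" by (auto simp: image_Suc_atLeastAtMost)
  finally show "map Suc s @ [1] \<in> perms (Suc n)" using sp by (auto simp: perms_iff distinct_map)
  have rec: "precedes (map Suc s @ [1]) (i + 1) i \<longleftrightarrow> i = 1 \<or> (\<exists>j. i = Suc j \<and> precedes s (j + 1) j)"
    if i1: "i \<ge> 1" for i
  proof (cases "i = 1")
    case True
    have "Suc 1 \<in> set (map Suc s)" using sp n by auto
    then show ?thesis
      using True precedes_append[of "map Suc s" "[1]" 2 1] by (simp add: numeral_2_eq_2)
  next
    case False
    then obtain j where j: "i = Suc j" "j \<ge> 1" using i1 by (cases i) auto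
    then have "precedes (map Suc s @ [1]) (i + 1) i \<longleftrightarrow> precedes (map Suc s) (Suc (j + 1)) (Suc j)"
      using precedes_append[of "map Suc s" "[1]" "i + 1" i] by simp
    also have "\<dots> \<longleftrightarrow> precedes s (j + 1) j" by (rule precedes_map) (simp add: inj_def)
    finally show ?thesis using j False by simp
  qed
  have "precedes s (j + 1) j \<Longrightarrow> 1 \<le> j \<and> j < n" for j
    using precedes_imp_in_set[of s "j + 1" j] sp by auto
  then show "recoils (Suc n) (map Suc s @ [1]) = insert 1 (Suc ` recoils n s)"
    using rec n by (auto simp: recoils_def image_iff Suc_le_eq)
  have "s \<noteq> []" using sp n by auto
  moreover have "1 < hd (map Suc s)"
    using \<open>s \<noteq> []\<close> hd_in_set[of s] sp(1) by (simp add: hd_map)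
  ultimately have "ltr_maxima (map Suc s @ [1]) = ltr_maxima s"
    using ltr_maxima_snoc_less_hd[of "map Suc s" 1] ltr_maxima_map[of Suc s]
    by (simp add: strict_mono_Suc_iff)
  then show "non_ltr_maxima (map Suc s @ [1]) = insert n (non_ltr_maxima s)"
    using ltr_maxima_subset[of s] sp(3) n by (auto simp: non_ltr_maxima_def)
qed

lemma hook_perm_exists:
  assumes "n \<ge> 1" "D \<subseteq> {1..<n}"
  shows "\<exists>s\<in>perms n. recoils n s = {1..card D} \<and> non_ltr_maxima s = D"
  using assms
proof (induction n arbitrary: D rule: nat_induct_at_least)
  case base
  then have "D = {}" by auto
  moreover have "[1] \<in> perms 1" by (simp add: perms_def)
  moreover have "recoils 1 [1] = {}" "non_ltr_maxima [1::nat] = {}"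
    by (auto simp: recoils_def non_ltr_maxima_def)
  ultimately show ?case by auto
next
  case (Suc n)
  show ?case
  proof (cases "n \<in> D")
    case False
    then have "D \<subseteq> {1..<n}" using Suc.prems by (auto simp: subset_iff less_Suc_eq)
    then obtain s where "s \<in> perms n" "recoils n s = {1..card D}" "non_ltr_maxima s = D"
      using Suc.IH by blast
    then show ?thesis using perm_snoc_max by metis
  next
    case True
    then have "D - {n} \<subseteq> {1..<n}" using Suc.prems by auto
    then obtain s where s: "s \<in> perms n" "recoils n s = {1..card (D - {n})}"
        "non_ltr_maxima s = D - {n}"
      using Suc.IH by blast
    have "finite D" using Suc.prems by (meson finite_atLeastLessThan finite_subset)
    then have "card D = Suc (card (D - {n}))" using True by (simp only: card_Suc_Diff1)
    moreover have "insert 1 (Suc ` {1..k}) = {1..Suc k}" for k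
      by (auto simp: image_iff)
    ultimately have "recoils (Suc n) (map Suc s @ [1]) = {1..card D}"
      using perm_shift_snoc_one(2)[OF s(1) Suc.hyps] s(2) by simp
    moreover have "non_ltr_maxima (map Suc s @ [1]) = D"
      using perm_shift_snoc_one(3)[OF s(1) Suc.hyps] s(3) True by auto
    ultimately show ?thesis using perm_shift_snoc_one(1)[OF s(1) Suc.hyps] by blast
  qed
qed

text \<open>Recoil set \<open>{1..k}\<close> means that \<open>k + 1, k, \<dots>, 1\<close> occur from left to right and so do
  \<open>k + 1, k + 2, \<dots>, n\<close>: the permutation is \<open>k + 1\<close> followed by a shuffle of a decreasing and an
  increasing word, and the positions of the decreasing word are its non-maxima.\<close>

lemma hook_perm_pos_order:
  assumes s: "s \<in> perms n" and rec: "recoils n s = {1..k}" and k: "k < n"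
  shows "\<And>u v. 1 \<le> u \<Longrightarrow> u < v \<Longrightarrow> v \<le> Suc k \<Longrightarrow> pos s v < pos s u"
    and "\<And>u v. Suc k \<le> u \<Longrightarrow> u < v \<Longrightarrow> v \<le> n \<Longrightarrow> pos s u < pos s v"
proof -
  have sp: "set s = {1..n}" "distinct s" "length s = n" using permsD[OF s] by auto
  have dec_step: "- int (pos s i) < - int (pos s (Suc i))" if "i \<in> {1..k}" for i
  proof -
    have "i \<in> set s" "Suc i \<in> set s" using sp(1) that k by auto
    moreover have "i \<in> recoils n s" using rec that by simp
    then have "precedes s (Suc i) i" by (simp add: recoils_def)
    ultimately show ?thesis using precedes_iff_pos_less[OF sp(2)] by simp
  qed
  show "pos s v < pos s u" if "1 \<le> u" "u < v" "v \<le> Suc k" for u v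
  proof -
    have "- int (pos s u) < - int (pos s v)"
      by (rule lift_Suc_mono_less_ivl[of "{1..k}" "\<lambda>i. - int (pos s i)" u v])
        (use dec_step that in auto)
    then show ?thesis by simp
  qed
  have inc_step: "pos s i < pos s (Suc i)" if "i \<in> {Suc k..<n}" for i
  proof -
    have m: "i \<in> set s" "Suc i \<in> set s" using sp(1) that by auto
    have "i \<notin> recoils n s" using rec that by simp
    then have "\<not> precedes s (Suc i) i" using that k by (simp add: recoils_def)
    then have "\<not> pos s (Suc i) < pos s i" using precedes_iff_pos_less[OF sp(2) m(2) m(1)] by simp
    moreover have "pos s (Suc i) \<noteq> pos s i" using pos_inj[OF m(2) m(1)] by auto
    ultimately show ?thesis by simp
  qed
  show "pos s u < pos s v" if "Suc k \<le> u" "u < v" "v \<le> n" for u v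
  proof -
    show ?thesis
      by (rule lift_Suc_mono_less_ivl[of "{Suc k..<n}" "pos s" u v]) (use inc_step that in auto)
  qed
qed

lemma hook_perm_hd:
  assumes s: "s \<in> perms n" and rec: "recoils n s = {1..k}" and k: "k < n"
  shows "s ! 0 = Suc k"
proof (rule ccontr)
  assume ne: "s ! 0 \<noteq> Suc k"
  have sp: "set s = {1..n}" "distinct s" "length s = n" using permsD[OF s] by auto
  then have "s ! 0 \<in> {1..n}" using nth_mem[of 0 s] k by simp
  then have "pos s (Suc k) < pos s (s ! 0)"
    using ne hook_perm_pos_order[OF assms, of "s ! 0" "Suc k"]
      hook_perm_pos_order[OF assms, of "Suc k" "s ! 0"] k
    by (cases "s ! 0 \<le> k") auto
  then show False using pos_nth[OF sp(2), of 0] k sp(3) by simp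
qed

lemma hook_perm_non_ltr_maxima:
  assumes s: "s \<in> perms n" and rec: "recoils n s = {1..k}" and k: "k < n"
  shows "non_ltr_maxima s = {p. p < n \<and> s ! p \<le> k}"
proof (rule set_eqI)
  have sp: "set s = {1..n}" "distinct s" "length s = n" using permsD[OF s] by auto
  have s0: "s ! 0 = Suc k" by (rule hook_perm_hd[OF assms])
  fix p
  show "p \<in> non_ltr_maxima s \<longleftrightarrow> p \<in> {p. p < n \<and> s ! p \<le> k}"
  proof (cases "1 \<le> p \<and> p < n")
    case True
    have "p \<in> ltr_maxima s \<longleftrightarrow> \<not> s ! p \<le> k"
    proof
      assume "p \<in> ltr_maxima s"
      then have "s ! 0 < s ! p" using True by (auto simp: ltr_maxima_def)
      then show "\<not> s ! p \<le> k" using s0 by simp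
    next
      assume big: "\<not> s ! p \<le> k"
      have "s ! p \<noteq> s ! 0" using nth_eq_iff_index_eq[OF sp(2), of p 0] True sp(3) by auto
      then have "Suc k < s ! p" using big s0 by simp
      moreover have "s ! p \<le> n" using nth_mem[of p s] True sp by simp
      ultimately have after: "pos s (s ! p) < pos s v" if "s ! p < v" "v \<le> n" for v
        using hook_perm_pos_order(2)[OF assms] that by simp
      have "s ! q < s ! p" if q: "q < p" for q
      proof (rule ccontr)
        assume "\<not> s ! q < s ! p"
        moreover have "s ! q \<noteq> s ! p"
          using nth_eq_iff_index_eq[OF sp(2), of q p] q True sp(3) by auto
        moreover have "s ! q \<le> n" using nth_mem[of q s] q True sp by simp
        ultimately have "pos s (s ! p) < pos s (s ! q)" using after by simp
        then show False using pos_nth[OF sp(2), of p] pos_nth[OF sp(2), of q] q True sp(3) by simp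
      qed
      then show "p \<in> ltr_maxima s" using True sp by (simp add: ltr_maxima_def)
    qed
    then show ?thesis using True sp by (auto simp: non_ltr_maxima_def)
  next
    case False
    then show ?thesis using sp s0 by (cases p) (auto simp: non_ltr_maxima_def)
  qed
qed

lemma hook_perm_filters:
  assumes s: "s \<in> perms n" and rec: "recoils n s = {1..k}" and k: "k < n"
  shows "filter (\<lambda>v. v \<le> k) s = rev [1..<Suc k]"
    and "filter (\<lambda>v. \<not> v \<le> k) s = [Suc k..<Suc n]"
proof -
  have sp: "set s = {1..n}" "distinct s" "length s = n" using permsD[OF s] by auto
  have sorted_pos: "sorted_wrt (\<lambda>a b. pos s a < pos s b) s"
    unfolding sorted_wrt_iff_nth_less using pos_nth[OF sp(2)] by auto
  have "sorted_wrt (<) (rev (filter (\<lambda>v. v \<le> k) s))"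
    unfolding sorted_wrt_rev
  proof (rule sorted_wrt_mono_rel[OF _ sorted_wrt_filter[OF sorted_pos]])
    fix a b assume "a \<in> set (filter (\<lambda>v. v \<le> k) s)" "b \<in> set (filter (\<lambda>v. v \<le> k) s)"
      and ab: "pos s a < pos s b"
    then have "a \<noteq> b" "1 \<le> a" "b \<le> k" using sp(1) by auto
    then show "b < a" using hook_perm_pos_order(1)[OF assms, of a b] ab by (cases "a < b") auto
  qed
  moreover have "set (rev (filter (\<lambda>v. v \<le> k) s)) = set [1..<Suc k]" using sp(1) k by auto
  ultimately have "rev (filter (\<lambda>v. v \<le> k) s) = [1..<Suc k]"
    by (rule strict_sorted_equal[OF sorted_wrt_upt])
  then show "filter (\<lambda>v. v \<le> k) s = rev [1..<Suc k]" by (metis rev_rev_ident)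
  have "sorted_wrt (<) (filter (\<lambda>v. \<not> v \<le> k) s)"
  proof (rule sorted_wrt_mono_rel[OF _ sorted_wrt_filter[OF sorted_pos]])
    fix a b assume "a \<in> set (filter (\<lambda>v. \<not> v \<le> k) s)" "b \<in> set (filter (\<lambda>v. \<not> v \<le> k) s)"
      and ab: "pos s a < pos s b"
    then have "a \<noteq> b" "Suc k \<le> b" "a \<le> n" using sp(1) by auto
    then show "a < b" using hook_perm_pos_order(2)[OF assms, of b a] ab by (cases "b < a") auto
  qed
  moreover have "set (filter (\<lambda>v. \<not> v \<le> k) s) = set [Suc k..<Suc n]" using sp(1) by auto
  ultimately show "filter (\<lambda>v. \<not> v \<le> k) s = [Suc k..<Suc n]"
    by (rule strict_sorted_equal[OF sorted_wrt_upt])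
qed

lemma shuffle_eqI:
  assumes "length xs = length ys" "\<And>i. i < length xs \<Longrightarrow> P (xs ! i) \<longleftrightarrow> P (ys ! i)"
    and "filter P xs = filter P ys" "filter (\<lambda>x. \<not> P x) xs = filter (\<lambda>x. \<not> P x) ys"
  shows "xs = ys"
  using assms
proof (induction xs arbitrary: ys)
  case (Cons x xs)
  obtain y ys' where ys: "ys = y # ys'" using Cons.prems(1) by (cases ys) auto
  have "P x \<longleftrightarrow> P y" using Cons.prems(2)[of 0] ys by simp
  then have "x = y" "filter P xs = filter P ys'" "filter (\<lambda>x. \<not> P x) xs = filter (\<lambda>x. \<not> P x) ys'"
    using Cons.prems(3,4) ys by (cases "P x"; simp)+
  moreover have "length xs = length ys'" "\<And>i. i < length xs \<Longrightarrow> P (xs ! i) \<longleftrightarrow> P (ys' ! i)"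
    using Cons.prems(1) Cons.prems(2)[of "Suc _"] ys by auto
  ultimately show ?case using Cons.IH ys by blast
qed simp

lemma card_hook_perms:
  assumes D: "D \<subseteq> {1..<n}" and k: "k < n"
  shows "card {s \<in> perms n. non_ltr_maxima s = D \<and> recoils n s = {1..k}} =
    (if card D = k then 1 else 0)"
proof -
  let ?H = "{s \<in> perms n. non_ltr_maxima s = D \<and> recoils n s = {1..k}}"
  have card_D: "card D = k" if "s \<in> ?H" for s
  proof -
    have "D = {p. p < length s \<and> s ! p \<le> k}"
      using hook_perm_non_ltr_maxima[OF _ _ k] permsD(3) that by auto
    then have "card D = length (filter (\<lambda>v. v \<le> k) s)" by (simp add: length_filter_conv_card)
    then show ?thesis using hook_perm_filters(1)[OF _ _ k] that by simp
  qed
  have unique: "s = s'" if "s \<in> ?H" "s' \<in> ?H" for s s'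
  proof (rule shuffle_eqI[where P = "\<lambda>v. v \<le> k"])
    show "length s = length s'" using permsD(3) that by auto
    show "s ! i \<le> k \<longleftrightarrow> s' ! i \<le> k" if "i < length s" for i
      using hook_perm_non_ltr_maxima[OF _ _ k] permsD(3) \<open>s \<in> ?H\<close> \<open>s' \<in> ?H\<close> that
      by (simp add: set_eq_iff) metis
  qed (use hook_perm_filters[OF _ _ k] that in auto)
  show ?thesis
  proof (cases "card D = k")
    case True
    then obtain s where "s \<in> perms n" "recoils n s = {1..k}" "non_ltr_maxima s = D"
      using hook_perm_exists[OF _ D] k by auto
    then have "?H = {s}" using unique by blast
    then show ?thesis using True by (simp only:) simp
  next
    case False
    then have "?H = {}" using card_D by blast
    then show ?thesis using False by (simp only:) simp
  qed
qed

lemma pair_U_Psi: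
  assumes J: "J \<in> comps n" and n: "n \<ge> 1"
  shows "pair n (U n J) (Psi n) = (-1) ^ (length J - 1)"
proof -
  let ?h = "\<lambda>k. replicate k 1 @ [n - k]"
  have "card (des J) = length J - 1" "length J \<le> n"
    using card_des length_le_sum_list J by (auto simp: comps_def)
  have U_hook: "U n J (?h k) = (if card (des J) = k then 1 else 0)" if k: "k < n" for k
    using U_eq_card[OF J hook_in_comps[OF k] n] card_hook_perms[OF des_subset_comps[OF J] k]
      des_hook[of "n - k" k] k by simp
  have "pair n (U n J) (Psi n) =
      (\<Sum>K\<in>comps n. \<Sum>k<n. U n J K * ((-1) ^ k * (if K = ?h k then 1 else 0)))"
    by (simp add: pair_def Psi_def sum_distrib_left)
  also have "\<dots> = (\<Sum>k<n. \<Sum>K\<in>comps n. U n J K * ((-1) ^ k * (if K = ?h k then 1 else 0)))"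
    by (rule sum.swap)
  also have "\<dots> = (\<Sum>k<n. (-1) ^ k * U n J (?h k))"
  proof (rule sum.cong)
    fix k assume "k \<in> {..<n}"
    then have "?h k \<in> comps n" by (intro hook_in_comps) simp
    then show "(\<Sum>K\<in>comps n. U n J K * ((-1) ^ k * (if K = ?h k then 1 else 0))) =
        (-1) ^ k * U n J (?h k)"
      using finite_comps by (simp add: if_distrib sum.delta cong: if_cong)
  qed simp
  also have "\<dots> = (\<Sum>k<n. if k = card (des J) then (-1) ^ card (des J) else 0)"
    using U_hook by (intro sum.cong) auto
  also have "\<dots> = (-1) ^ (length J - 1)"
    using \<open>card (des J) = length J - 1\<close> \<open>length J \<le> n\<close> n by (simp add: sum.delta')
  finally show ?thesis .
qed

lemma Psi_eq_0:
  assumes "K \<notin> comps n"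
  shows "Psi n K = 0"
proof -
  have "K \<noteq> replicate k 1 @ [n - k]" if "k < n" for k
    using hook_in_comps[OF that] assms by auto
  then show ?thesis by (simp add: Psi_def)
qed

theorem mainTheorem9:
  fixes n :: nat
  assumes "n \<ge> 1"
  shows "Psi n = (\<lambda>K. \<Sum>I\<in>comps n. (-1) ^ (length I - 1) * V n I K)"
proof -
  have "Psi n = (\<lambda>K. \<Sum>I\<in>comps n. pair n (U n I) (Psi n) * V n I K)"
    using expansion_in_V[OF assms] Psi_eq_0 by blast
  also have "\<dots> = (\<lambda>K. \<Sum>I\<in>comps n. (-1) ^ (length I - 1) * V n I K)"
    using pair_U_Psi assms by simp
  finally show ?thesis .
qed

end
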